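(* Equip $\mathbb{R}^{1,1}$ with the Minkowski inner product $x\cdot y=-x_0y_0+x_1y_1$, let $O$ be the origin, and for $\theta_1,\theta_2\in\mathbb{R}$ let $P_i=(\sinh\theta_i,\cosh\theta_i)$, $i=1,2$, be points on the branch $x_1>0$ of the hyperbola $-x_0^2+x_1^2=1$. Then the vectors $OP_1$ and $OP_2$ are spacelike and the pseudo-angle $\Theta$ between them satisfies $\cosh^2(\Theta)=\cosh^2(\theta_1-\theta_2)$, i.e. $\Theta=|\theta_1-\theta_2|$. Consequently, for any $\theta_0\in\mathbb{R}$ with $\theta_0\neq\theta_1,\theta_2$ and $P_0=(\sinh\theta_0,\cosh\theta_0)$, $\Theta$ is twice the pseudo-angle between the chords $P_0P_1$ and $P_0P_2$, the latter being $\frac{|\theta_1-\theta_2|}{2}$.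
   Context: A vector $x\in\mathbb{R}^{1,1}$ is timelike if $x\cdot x<0$ and spacelike if $x\cdot x>0$. For two vectors $x,y$ that are both timelike or both spacelike, the pseudo-angle $\theta\ge 0$ between them is defined by $\cosh^2(\theta)=\frac{(x\cdot y)^2}{(x\cdot x)(y\cdot y)}$. The pseudo-angle between two chords is the pseudo-angle between their direction vectors. *)

theory Defs
  imports Complex_Main
begin

definition mink :: "real \<times> real \<Rightarrow> real \<times> real \<Rightarrow> real" where
  "mink x y = - fst x * fst y + snd x * snd y"

definition timelike :: "real \<times> real \<Rightarrow> bool" where
  "timelike x \<longleftrightarrow> mink x x < 0"

definition spacelike :: "real \<times> real \<Rightarrow> bool" where
  "spacelike x \<longleftrightarrow> mink x x > 0"

text \<open>The pseudo-angle: the unique theta >= 0 with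
  cosh(theta)^2 = (x.y)^2 / ((x.x)(y.y)); meaningful when x, y are both
  timelike or both spacelike.\<close>
definition pseudo_angle :: "real \<times> real \<Rightarrow> real \<times> real \<Rightarrow> real" where
  "pseudo_angle x y = (THE \<theta>. \<theta> \<ge> 0 \<and>
     (cosh \<theta>)\<^sup>2 = (mink x y)\<^sup>2 / (mink x x * mink y y))"

definition hpt :: "real \<Rightarrow> real \<times> real" where
  "hpt \<theta> = (sinh \<theta>, cosh \<theta>)"

definition chord :: "real \<times> real \<Rightarrow> real \<times> real \<Rightarrow> real \<times> real" where
  "chord P Q = (fst Q - fst P, snd Q - snd P)"

end

theory Submission
  imports Defs
begin

text \<open>The points of the hyperbola are parametrised by the rapidity, and the Minkowski product
  of the points with rapidities a and b is cosh (a - b), whence their pseudo-angle is |a - b|.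
  By the half-argument formulas, the chord from rapidity a to rapidity b is the nonzero
  multiple 2 sinh ((b - a) / 2) of the timelike unit vector of rapidity (a + b) / 2. Two chords
  from the same point a to b and c are therefore timelike, and their pseudo-angle is the
  difference of the midpoint rapidities, |b - c| / 2: an inscribed angle theorem.\<close>

lemma pseudo_angle_eqI:
  assumes "(mink x y)\<^sup>2 / (mink x x * mink y y) = (cosh t)\<^sup>2"
  shows "pseudo_angle x y = \<bar>t\<bar>"
  unfolding pseudo_angle_def
proof (rule the_equality)
  show "0 \<le> \<bar>t\<bar> \<and> (cosh \<bar>t\<bar>)\<^sup>2 = (mink x y)\<^sup>2 / (mink x x * mink y y)"
    using assms by simp
next
  fix \<theta> assume \<theta>: "0 \<le> \<theta> \<and> (cosh \<theta>)\<^sup>2 = (mink x y)\<^sup>2 / (mink x x * mink y y)"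
  with assms have "(cosh \<theta>)\<^sup>2 = (cosh t)\<^sup>2" by simp
  then have "cosh \<theta> = cosh t" by (simp add: power2_eq_iff_nonneg)
  with \<theta> show "\<theta> = \<bar>t\<bar>" by simp
qed

lemma mink_hpt: "mink (hpt a) (hpt b) = cosh (a - b)"
  unfolding mink_def hpt_def by (simp add: cosh_diff)

lemma spacelike_hpt: "spacelike (hpt a)"
  unfolding spacelike_def mink_hpt by simp

lemma pseudo_angle_hpt: "pseudo_angle (hpt a) (hpt b) = \<bar>a - b\<bar>"
  by (rule pseudo_angle_eqI) (simp add: mink_hpt)

lemma mink_scaled_timelike_units:
  "mink (s * cosh m, s * sinh m) (r * cosh n, r * sinh n) = - s * r * cosh (m - n)"
  unfolding mink_def by (simp add: cosh_diff algebra_simps)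

lemma timelike_scaled_timelike_unit:
  assumes "s \<noteq> 0"
  shows "timelike (s * cosh m, s * sinh m)"
  unfolding timelike_def mink_scaled_timelike_units using assms by (auto simp: zero_less_mult_iff)

lemma pseudo_angle_scaled_timelike_units:
  assumes "s \<noteq> 0" and "r \<noteq> 0"
  shows "pseudo_angle (s * cosh m, s * sinh m) (r * cosh n, r * sinh n) = \<bar>m - n\<bar>"
  by (rule pseudo_angle_eqI)
    (use assms in \<open>simp add: mink_scaled_timelike_units field_simps power2_eq_square\<close>)

lemma chord_hpt:
  "chord (hpt a) (hpt b) =
     (2 * sinh ((b - a) / 2) * cosh ((a + b) / 2), 2 * sinh ((b - a) / 2) * sinh ((a + b) / 2))"
proof -
  define m d where "m = (a + b) / 2" and "d = (b - a) / 2"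
  have a: "a = m - d" and b: "b = m + d" unfolding m_def d_def by (simp_all add: field_simps)
  show ?thesis
    unfolding chord_def hpt_def
    by (simp add: a b sinh_add sinh_diff cosh_add cosh_diff m_def [symmetric] d_def [symmetric]
        algebra_simps)
qed

lemma timelike_chord_hpt:
  assumes "a \<noteq> b"
  shows "timelike (chord (hpt a) (hpt b))"
  unfolding chord_hpt by (rule timelike_scaled_timelike_unit) (use assms in simp)

lemma pseudo_angle_chords_hpt:
  assumes "a \<noteq> b" and "a \<noteq> c"
  shows "pseudo_angle (chord (hpt a) (hpt b)) (chord (hpt a) (hpt c)) = \<bar>b - c\<bar> / 2"
proof -
  have "pseudo_angle (chord (hpt a) (hpt b)) (chord (hpt a) (hpt c))
      = \<bar>(a + b) / 2 - (a + c) / 2\<bar>"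
    unfolding chord_hpt by (rule pseudo_angle_scaled_timelike_units) (use assms in simp_all)
  also have "\<dots> = \<bar>b - c\<bar> / 2" by (simp add: abs_divide flip: diff_divide_distrib)
  finally show ?thesis .
qed

theorem mainTheorem2:
  fixes \<theta>1 \<theta>2 :: real
  defines "P1 \<equiv> hpt \<theta>1" and "P2 \<equiv> hpt \<theta>2"
  shows "spacelike P1 \<and> spacelike P2
    \<and> (cosh (pseudo_angle P1 P2))\<^sup>2 = (cosh (\<theta>1 - \<theta>2))\<^sup>2
    \<and> pseudo_angle P1 P2 = \<bar>\<theta>1 - \<theta>2\<bar>
    \<and> (\<forall>\<theta>0::real. \<theta>0 \<noteq> \<theta>1 \<and> \<theta>0 \<noteq> \<theta>2 \<longrightarrow>
         ((timelike (chord (hpt \<theta>0) P1) \<and> timelike (chord (hpt \<theta>0) P2)) \<or>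
          (spacelike (chord (hpt \<theta>0) P1) \<and> spacelike (chord (hpt \<theta>0) P2)))
         \<and> pseudo_angle (chord (hpt \<theta>0) P1) (chord (hpt \<theta>0) P2) = \<bar>\<theta>1 - \<theta>2\<bar> / 2
         \<and> pseudo_angle P1 P2 = 2 * pseudo_angle (chord (hpt \<theta>0) P1) (chord (hpt \<theta>0) P2))"
  unfolding P1_def P2_def
  by (simp add: spacelike_hpt pseudo_angle_hpt timelike_chord_hpt pseudo_angle_chords_hpt)

end
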